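(* Let $N\ge1$ be an integer and $\Delta(r)=\lceil\min\{r,N-r\}/3\rceil$ for $r\in\{0,\dots,N\}$. Let $(X_\ell)_{\ell\ge0}$ be a Markov chain on $\{0,\dots,N\}$ with $X_0\in\{1,\dots,N\}$ and, conditionally on $X_0,\dots,X_\ell$, $X_{\ell+1}=X_\ell+\Delta(X_\ell)$ or $X_{\ell+1}=X_\ell-\Delta(X_\ell)$, each with probability $1/2$. Let $\mathrm{Fill}=\{\lim_{\ell\to\infty}X_\ell=N\}$. Then for every $\ell\ge1$, \[1-\mathbb E\Big[\frac{X_\ell}{N}\,\Big|\,\mathrm{Fill}\Big]\le\Big(\frac{71}{72}\Big)^{\ell}\sqrt N.\]
   Context: In the paper, $X_\ell$ is the total ink just after the $\ell$-th depinking time of the chameleon process and $N=a(m-1)+bn$; the claim above is the statement in terms of the Markov chain that this ink sequence forms. *)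

theory Defs
  imports "HOL-Probability.Probability"
begin

definition chamDelta :: "nat \<Rightarrow> nat \<Rightarrow> nat" where
  "chamDelta N r = nat \<lceil>real (min r (N - r)) / 3\<rceil>"

definition fillEvent :: "'a measure \<Rightarrow> (nat \<Rightarrow> 'a \<Rightarrow> nat) \<Rightarrow> nat \<Rightarrow> 'a set" where
  "fillEvent M X N = {\<omega> \<in> space M. (\<lambda>l. real (X l \<omega>)) \<longlonglongrightarrow> real N}"

text \<open>Markov property with the chain's transition kernel, stated via finite-dimensional
  distributions: for every history xs = (x_0,...,x_l) and every y,
  P(X_0=x_0,...,X_l=x_l, X_(l+1)=y) = K(x_l,y) * P(X_0=x_0,...,X_l=x_l),
  where K(x,y) = 1/2 [y = x + Delta x] + 1/2 [y = x - Delta x].\<close>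
definition inkKernel :: "nat \<Rightarrow> nat \<Rightarrow> nat \<Rightarrow> real" where
  "inkKernel N x y =
     (if y = x + chamDelta N x then 1/2 else 0) + (if y = x - chamDelta N x then 1/2 else 0)"

definition inkChain :: "'a measure \<Rightarrow> (nat \<Rightarrow> 'a \<Rightarrow> nat) \<Rightarrow> nat \<Rightarrow> bool" where
  "inkChain M X N \<longleftrightarrow>
     (\<forall>i. X i \<in> measurable M (count_space UNIV)) \<and>
     (AE \<omega> in M. X 0 \<omega> \<in> {1..N}) \<and>
     (\<forall>l xs y. length xs = Suc l \<longrightarrow>
        measure M {\<omega> \<in> space M. (\<forall>i\<le>l. X i \<omega> = xs ! i) \<and> X (Suc l) \<omega> = y}
        = inkKernel N (last xs) y * measure M {\<omega> \<in> space M. \<forall>i\<le>l. X i \<omega> = xs ! i})"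

end

theory Submission
  imports Defs
begin

text \<open>The ink chain is a martingale on {0..N} that is absorbed at N, and the potential
  \<phi>(x) = sqrt (x (N - x)) shrinks by the factor 71/72 in expectation at every step, because the step
  \<Delta>(x) is at least min(x, N - x)/3. Hence E \<phi>(X_l) \<le> (71/72)^l sqrt N E X_0.
  By the martingale property, P(Fill | X_0, ..., X_l) \<le> X_l / N, so
  P(Fill) - E[X_l / N; Fill] \<le> E[(1 - X_l / N) X_l / N] \<le> E \<phi>(X_l) / N.
  On the other hand X_n \<le> N [X_n = N] + N \<phi>(X_n) and absorption give P(Fill) \<ge> E X_0 / N
  as n \<rightarrow> \<infinity>. Dividing the two estimates gives the bound.\<close>

lemma sqrt_shifted_products_le:
  fixes a b d :: real
  assumes d0: "0 \<le> d" and da: "d \<le> a" and db: "d \<le> b" and min3: "min a b \<le> 3 * d"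
  shows "sqrt ((a + d) * (b - d)) + sqrt ((a - d) * (b + d)) \<le> 2 * (71/72) * sqrt (a * b)"
proof -
  \<comment> \<open>k is chosen so that 2 (1 + k) = (2 * 71/72)^2; the hypothesis min a b \<le> 3 d is what
    gives 1 - k^2 \<le> 1/9.\<close>
  define k :: real where "k = 2449/2592"
  have a0: "0 \<le> a" and b0: "0 \<le> b" and k0: "0 \<le> k"
    using d0 da db by (auto simp: k_def)
  have P0: "0 \<le> (a + d) * (b - d)" and Q0: "0 \<le> (a - d) * (b + d)"
    using a0 b0 d0 da db by auto
  have min_sq: "(min a b)\<^sup>2 \<le> 9 * d\<^sup>2"
    using power_mono[OF min3, of 2] a0 b0 by (simp add: power_mult_distrib)
  have "a\<^sup>2 * b\<^sup>2 \<le> 9 * d\<^sup>2 * (a\<^sup>2 + b\<^sup>2)"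
  proof (cases "a \<le> b")
    case True
    then have "a\<^sup>2 * b\<^sup>2 \<le> 9 * d\<^sup>2 * b\<^sup>2"
      using min_sq by (simp add: mult_right_mono)
    moreover have "0 \<le> 9 * d\<^sup>2 * a\<^sup>2" by simp
    ultimately show ?thesis unfolding distrib_left by linarith
  next
    case False
    then have "a\<^sup>2 * b\<^sup>2 \<le> 9 * d\<^sup>2 * a\<^sup>2"
      using min_sq by (simp add: mult_left_mono mult.commute)
    moreover have "0 \<le> 9 * d\<^sup>2 * b\<^sup>2" by simp
    ultimately show ?thesis unfolding distrib_left by linarith
  qed
  also have "\<dots> \<le> 9 * d\<^sup>2 * (a\<^sup>2 + b\<^sup>2 + 2 * k * a * b)"
    using a0 b0 k0 by (intro mult_left_mono) auto
  finally have ab: "a\<^sup>2 * b\<^sup>2 \<le> 9 * d\<^sup>2 * (a\<^sup>2 + b\<^sup>2 + 2 * k * a * b)" .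
  have "((a + d) * (b - d)) * ((a - d) * (b + d)) \<le> (k * a * b + d\<^sup>2)\<^sup>2"
  proof -
    have "(1 - k\<^sup>2) * (a\<^sup>2 * b\<^sup>2) \<le> (1/9) * (a\<^sup>2 * b\<^sup>2)"
      by (intro mult_right_mono) (auto simp: k_def power2_eq_square)
    also have "\<dots> \<le> d\<^sup>2 * (a\<^sup>2 + b\<^sup>2 + 2 * k * a * b)"
      using ab by simp
    finally show ?thesis
      by (simp add: algebra_simps power2_eq_square)
  qed
  then have prod: "sqrt (((a + d) * (b - d)) * ((a - d) * (b + d))) \<le> k * a * b + d\<^sup>2"
    using k0 a0 b0 by (intro real_le_lsqrt) auto
  have "(sqrt ((a + d) * (b - d)) + sqrt ((a - d) * (b + d)))\<^sup>2
      = (a + d) * (b - d) + (a - d) * (b + d) + 2 * sqrt (((a + d) * (b - d)) * ((a - d) * (b + d)))"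
    using P0 Q0 by (simp add: power2_sum real_sqrt_mult[symmetric] mult.assoc)
  also have "\<dots> \<le> (a + d) * (b - d) + (a - d) * (b + d) + 2 * (k * a * b + d\<^sup>2)"
    using prod by simp
  also have "\<dots> = (2 * (71/72))\<^sup>2 * (a * b)"
    by (simp add: k_def algebra_simps power2_eq_square)
  finally have "sqrt ((a + d) * (b - d)) + sqrt ((a - d) * (b + d)) \<le> sqrt ((2 * (71/72))\<^sup>2 * (a * b))"
    by (intro real_le_rsqrt)
  then show ?thesis by (simp add: real_sqrt_mult)
qed

lemma chamDelta_le: "chamDelta N x \<le> min x (N - x)"
proof -
  have "\<lceil>real (min x (N - x)) / 3\<rceil> \<le> int (min x (N - x))"
    by (simp add: ceiling_le_iff)
  then show ?thesis unfolding chamDelta_def by linarith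
qed

lemma min_le_3_chamDelta: "real (min x (N - x)) \<le> 3 * real (chamDelta N x)"
  using le_of_int_ceiling[of "real (min x (N - x)) / 3"] unfolding chamDelta_def by linarith

lemma chamDelta_self [simp]: "chamDelta N N = 0"
  unfolding chamDelta_def by simp

lemma sum_inkKernel:
  assumes "x \<le> N"
  shows "(\<Sum>y\<le>N. inkKernel N x y * f y) = (f (x + chamDelta N x) + f (x - chamDelta N x)) / 2"
proof -
  have "x + chamDelta N x \<le> N"
    using chamDelta_le[of N x] assms by auto
  then show ?thesis
    by (simp add: inkKernel_def distrib_right sum.distrib if_distrib[of "\<lambda>c. c * _"]
        sum.delta add_divide_distrib cong: if_cong)
qed

lemma inkKernel_beyond: "x \<le> N \<Longrightarrow> N < y \<Longrightarrow> inkKernel N x y = 0"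
  using chamDelta_le[of N x] unfolding inkKernel_def by auto

lemma inkKernel_absorbing: "y \<noteq> N \<Longrightarrow> inkKernel N N y = 0"
  unfolding inkKernel_def by auto

definition gap_potential :: "nat \<Rightarrow> nat \<Rightarrow> real" where
  "gap_potential N x = sqrt (real x * (real N - real x))"

lemma gap_potential_nonneg: "x \<le> N \<Longrightarrow> 0 \<le> gap_potential N x"
  unfolding gap_potential_def by simp

lemma gap_potential_le_N: "x \<le> N \<Longrightarrow> gap_potential N x \<le> real N"
  unfolding gap_potential_def
  by (intro real_le_lsqrt) (auto simp: power2_eq_square intro: mult_mono)

lemma mult_gap_le_gap_potential:
  assumes "x \<le> N"
  shows "real x * (real N - real x) \<le> real N * gap_potential N x"
proof -
  have "real x * (real N - real x) = gap_potential N x * gap_potential N x"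
    using assms by (simp add: gap_potential_def)
  also have "\<dots> \<le> real N * gap_potential N x"
    using assms by (intro mult_right_mono gap_potential_le_N gap_potential_nonneg)
  finally show ?thesis .
qed

lemma gap_potential_le_sqrt_mult: "x \<le> N \<Longrightarrow> gap_potential N x \<le> sqrt (real N) * real x"
proof -
  assume "x \<le> N"
  have "real x * (real N - real x) \<le> real N * (real x)\<^sup>2"
  proof (cases "x = 0")
    case False
    have "real x * (real N - real x) \<le> real x * real N"
      by (simp add: mult_left_mono)
    also have "\<dots> \<le> real x * real N * real x"
      using False mult_left_mono[of 1 "real x" "real x * real N"] by simp
    finally show ?thesis by (simp add: power2_eq_square algebra_simps)
  qed simp
  then show ?thesis
    unfolding gap_potential_def using real_sqrt_le_mono by (fastforce simp: real_sqrt_mult)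
qed

lemma gap_potential_ink_step_le:
  assumes "x \<le> N"
  shows "(gap_potential N (x + chamDelta N x) + gap_potential N (x - chamDelta N x)) / 2
           \<le> 71/72 * gap_potential N x"
proof -
  define d where "d = chamDelta N x"
  have d: "d \<le> x" "d \<le> N - x"
    using chamDelta_le[of N x] by (auto simp: d_def)
  have "min (real x) (real N - real x) \<le> 3 * real d"
    using min_le_3_chamDelta[of x N] assms by (simp add: d_def of_nat_diff min_def split: if_splits)
  then have "sqrt ((real x + real d) * ((real N - real x) - real d))
      + sqrt ((real x - real d) * ((real N - real x) + real d))
      \<le> 2 * (71/72) * sqrt (real x * (real N - real x))"
    using d assms by (intro sqrt_shifted_products_le) auto
  moreover have "gap_potential N (x + d) = sqrt ((real x + real d) * ((real N - real x) - real d))"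
    by (simp add: gap_potential_def algebra_simps)
  moreover have "gap_potential N (x - d) = sqrt ((real x - real d) * ((real N - real x) + real d))"
    using d by (simp add: gap_potential_def algebra_simps of_nat_diff)
  ultimately have "gap_potential N (x + d) + gap_potential N (x - d) \<le> 2 * (71/72) * gap_potential N x"
    by (simp only: gap_potential_def[of N x])
  then show ?thesis by (simp add: d_def)
qed

lemma tendsto_of_nat_iff_eventually_eq:
  "(\<lambda>l. real (f l)) \<longlonglongrightarrow> real n \<longleftrightarrow> (\<forall>\<^sub>F l in sequentially. f l = n)"
proof
  assume "(\<lambda>l. real (f l)) \<longlonglongrightarrow> real n"
  then have "\<forall>\<^sub>F l in sequentially. dist (real (f l)) (real n) < 1"
    by (rule tendstoD) simp
  then show "\<forall>\<^sub>F l in sequentially. f l = n"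
    by (rule eventually_mono) (auto simp: dist_real_def abs_less_iff)
qed (rule tendsto_eventually, simp add: eventually_mono)

locale bounded_markov_chain = prob_space M for M :: "'a measure" +
  fixes X :: "nat \<Rightarrow> 'a \<Rightarrow> nat" and N :: nat and K :: "nat \<Rightarrow> nat \<Rightarrow> real"
  assumes measurable_X [measurable]: "\<And>i. X i \<in> measurable M (count_space UNIV)"
    and AE_X0_le: "AE \<omega> in M. X 0 \<omega> \<le> N"
    and kernel_beyond: "\<And>x y. x \<le> N \<Longrightarrow> N < y \<Longrightarrow> K x y = 0"
    and markov: "\<And>l xs y. length xs = Suc l \<Longrightarrow>
        measure M {\<omega> \<in> space M. (\<forall>i\<le>l. X i \<omega> = xs ! i) \<and> X (Suc l) \<omega> = y}
        = K (last xs) y * measure M {\<omega> \<in> space M. \<forall>i\<le>l. X i \<omega> = xs ! i}"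
begin

definition hist :: "nat \<Rightarrow> 'a \<Rightarrow> nat list" where
  "hist m \<omega> = map (\<lambda>i. X i \<omega>) [0..<Suc m]"

definition cyl :: "nat \<Rightarrow> nat list \<Rightarrow> 'a set" where
  "cyl m xs = {\<omega> \<in> space M. hist m \<omega> = xs}"

definition histories :: "nat \<Rightarrow> nat list set" where
  "histories m = {xs. set xs \<subseteq> {..N} \<and> length xs = Suc m}"

definition hist_expect :: "nat \<Rightarrow> (nat list \<Rightarrow> real) \<Rightarrow> real" where
  "hist_expect m h = (\<Sum>xs\<in>histories m. h xs * measure M (cyl m xs))"

definition step_mean :: "(nat \<Rightarrow> real) \<Rightarrow> nat \<Rightarrow> real" where
  "step_mean f x = (\<Sum>y\<le>N. K x y * f y)"

lemma length_hist [simp]: "length (hist m \<omega>) = Suc m"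
  by (simp add: hist_def)

lemma last_hist [simp]: "last (hist m \<omega>) = X m \<omega>"
  by (simp add: hist_def del: upt_Suc add: upt_Suc_append)

lemma hist_Suc: "hist (Suc m) \<omega> = hist m \<omega> @ [X (Suc m) \<omega>]"
  by (simp add: hist_def)

lemma take_hist: "l \<le> n \<Longrightarrow> take (Suc l) (hist n \<omega>) = hist l \<omega>"
  by (simp add: hist_def take_map min_def del: upt_Suc)

lemma cyl_eq:
  "length xs = Suc m \<Longrightarrow> cyl m xs = {\<omega> \<in> space M. \<forall>i\<le>m. X i \<omega> = xs ! i}"
  by (auto simp: cyl_def hist_def list_eq_iff_nth_eq less_Suc_eq_le simp del: upt_Suc)

lemma sets_cyl [measurable]: "cyl m xs \<in> sets M"
proof (cases "length xs = Suc m")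
  case True
  then show ?thesis by (simp add: cyl_eq)
next
  case False
  then have "cyl m xs = {}" by (auto simp: cyl_def)
  then show ?thesis by simp
qed

lemma measurable_hist [measurable]: "hist m \<in> measurable M (count_space UNIV)"
  unfolding measurable_count_space_eq2_countable
  using sets_cyl by (auto simp: cyl_def vimage_def Int_def conj_commute)

lemma measure_cyl_Suc:
  "length xs = Suc m \<Longrightarrow> measure M (cyl (Suc m) (xs @ [y])) = K (last xs) y * measure M (cyl m xs)"
  using markov[of xs m y]
  by (simp add: cyl_eq nth_append le_Suc_eq less_Suc_eq_le conj_disj_distribL all_conj_distrib
      cong: conj_cong)

lemma AE_no_null_transition:
  assumes "\<And>x y. Q x y \<Longrightarrow> K x y = 0"
  shows "AE \<omega> in M. \<not> Q (X m \<omega>) (X (Suc m) \<omega>)"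
proof -
  have "AE \<omega> in M. \<omega> \<notin> cyl (Suc m) (xs @ [y])" if "length xs = Suc m" "Q (last xs) y" for xs y
    using that assms by (intro AE_not_in null_setsI) (simp_all add: measure_cyl_Suc emeasure_eq_measure)
  then have "AE \<omega> in M. \<forall>xs y. length xs = Suc m \<and> Q (last xs) y \<longrightarrow> \<omega> \<notin> cyl (Suc m) (xs @ [y])"
    by (auto simp: AE_all_countable)
  with AE_space show ?thesis
  proof eventually_elim
    case (elim \<omega>)
    then have "\<omega> \<in> cyl (Suc m) (hist m \<omega> @ [X (Suc m) \<omega>])"
      by (simp add: cyl_def hist_Suc)
    with elim(2) show ?case by auto
  qed
qed

lemma AE_le_N: "AE \<omega> in M. \<forall>m. X m \<omega> \<le> N"
proof -
  have "AE \<omega> in M. X m \<omega> \<le> N" for m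
  proof (induction m)
    case 0
    show ?case by (rule AE_X0_le)
  next
    case (Suc m)
    moreover have "AE \<omega> in M. \<not> (X m \<omega> \<le> N \<and> N < X (Suc m) \<omega>)"
      using kernel_beyond by (intro AE_no_null_transition) auto
    ultimately show ?case by eventually_elim auto
  qed
  then show ?thesis by (simp add: AE_all_countable)
qed

lemma hist_in_histories: "\<forall>m. X m \<omega> \<le> N \<Longrightarrow> hist m \<omega> \<in> histories m"
  by (auto simp: histories_def hist_def)

lemma finite_histories [simp]: "finite (histories m)"
  unfolding histories_def by (rule finite_lists_length_eq) simp

lemma last_le_N: "xs \<in> histories m \<Longrightarrow> last xs \<le> N"
  by (cases xs rule: rev_cases) (auto simp: histories_def)

lemma borel_measurable_hist_comp [measurable]: "(\<lambda>\<omega>. h (hist m \<omega>) :: real) \<in> borel_measurable M"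
  by (rule measurable_compose[OF measurable_hist]) simp

lemma integral_hist_indicator:
  assumes S: "S \<in> sets M"
  shows "(\<integral>\<omega>. h (hist m \<omega>) * indicator S \<omega> \<partial>M)
    = (\<Sum>xs\<in>histories m. h xs * measure M (S \<inter> cyl m xs))"
proof -
  have ae: "AE \<omega> in M. h (hist m \<omega>) * indicator S \<omega>
      = (\<Sum>xs\<in>histories m. h xs * indicator (S \<inter> cyl m xs) \<omega>)"
    using AE_le_N AE_space
  proof eventually_elim
    case (elim \<omega>)
    have "(\<Sum>xs\<in>histories m. h xs * indicator (S \<inter> cyl m xs) \<omega>)
        = (\<Sum>xs\<in>histories m. if xs = hist m \<omega> then h xs * indicator S \<omega> else 0)"
      using elim by (intro sum.cong) (auto simp: cyl_def indicator_def)
    then show ?case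
      using hist_in_histories[OF elim(1)] by simp
  qed
  have "(\<integral>\<omega>. h (hist m \<omega>) * indicator S \<omega> \<partial>M)
      = (\<integral>\<omega>. (\<Sum>xs\<in>histories m. h xs * indicator (S \<inter> cyl m xs) \<omega>) \<partial>M)"
    using S by (intro integral_cong_AE[OF _ _ ae] borel_measurable_sum borel_measurable_times
        borel_measurable_indicator borel_measurable_const borel_measurable_hist_comp sets.Int sets_cyl)
  also have "\<dots> = (\<Sum>xs\<in>histories m. h xs * measure M (S \<inter> cyl m xs))"
    using S by (subst Bochner_Integration.integral_sum)
      (auto intro!: integrable_mult_right integrable_real_indicator simp: emeasure_eq_measure)
  finally show ?thesis .
qed

lemma measure_hist_pred:
  "measure M {\<omega> \<in> space M. P (hist m \<omega>)} = hist_expect m (\<lambda>xs. of_bool (P xs))"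
proof -
  let ?S = "{\<omega> \<in> space M. P (hist m \<omega>)}"
  have cyl: "?S \<inter> cyl m xs = (if P xs then cyl m xs else {})" for xs
    by (auto simp: cyl_def)
  have "?S \<in> sets M" by measurable
  then have "measure M ?S = (\<Sum>xs\<in>histories m. 1 * measure M (?S \<inter> cyl m xs))"
    using integral_hist_indicator[of ?S "\<lambda>_. 1" m] by simp
  also have "\<dots> = hist_expect m (\<lambda>xs. of_bool (P xs))"
    unfolding hist_expect_def by (intro sum.cong refl) (simp add: cyl)
  finally show ?thesis .
qed

lemma hist_expect_mono:
  "(\<And>xs. xs \<in> histories m \<Longrightarrow> h xs \<le> g xs) \<Longrightarrow> hist_expect m h \<le> hist_expect m g"
  unfolding hist_expect_def by (intro sum_mono mult_right_mono) auto

lemma hist_expect_cong: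
  "(\<And>xs. xs \<in> histories m \<Longrightarrow> h xs = g xs) \<Longrightarrow> hist_expect m h = hist_expect m g"
  unfolding hist_expect_def by (intro sum.cong) auto

lemma hist_expect_add: "hist_expect m (\<lambda>xs. h xs + g xs) = hist_expect m h + hist_expect m g"
  unfolding hist_expect_def by (simp add: sum.distrib distrib_right)

lemma hist_expect_scale: "hist_expect m (\<lambda>xs. a * h xs) = a * hist_expect m h"
  unfolding hist_expect_def by (simp add: sum_distrib_left mult.assoc)

lemma histories_Suc: "histories (Suc m) = (\<lambda>(xs, y). xs @ [y]) ` (histories m \<times> {..N})"
proof
  show "histories (Suc m) \<subseteq> (\<lambda>(xs, y). xs @ [y]) ` (histories m \<times> {..N})"
  proof
    fix ys assume ys: "ys \<in> histories (Suc m)"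
    then obtain xs y where "ys = xs @ [y]"
      by (cases ys rule: rev_cases) (auto simp: histories_def)
    with ys show "ys \<in> (\<lambda>(xs, y). xs @ [y]) ` (histories m \<times> {..N})"
      by (force simp: histories_def)
  qed
qed (auto simp: histories_def)

lemma hist_expect_step:
  "hist_expect (Suc m) (\<lambda>ys. G (butlast ys) * f (last ys))
    = hist_expect m (\<lambda>xs. G xs * step_mean f (last xs))"
proof -
  have inj: "inj_on (\<lambda>(xs, y). xs @ [y]) (histories m \<times> {..N})"
    by (auto simp: inj_on_def)
  have "hist_expect (Suc m) (\<lambda>ys. G (butlast ys) * f (last ys))
      = (\<Sum>xs\<in>histories m. \<Sum>y\<le>N. G xs * f y * measure M (cyl (Suc m) (xs @ [y])))"
    unfolding hist_expect_def histories_Suc sum.reindex[OF inj]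
    by (simp add: sum.cartesian_product case_prod_beta)
  also have "\<dots> = hist_expect m (\<lambda>xs. G xs * step_mean f (last xs))"
    unfolding hist_expect_def step_mean_def
    by (intro sum.cong refl) (auto simp: measure_cyl_Suc histories_def sum_distrib_left sum_distrib_right
        intro!: sum.cong)
  finally show ?thesis .
qed

lemma hist_expect_contraction:
  assumes c: "0 \<le> c" and contr: "\<And>x. x \<le> N \<Longrightarrow> step_mean \<phi> x \<le> c * \<phi> x"
  shows "hist_expect m (\<lambda>xs. \<phi> (last xs)) \<le> c ^ m * hist_expect 0 (\<lambda>xs. \<phi> (last xs))"
proof (induction m)
  case (Suc m)
  have "hist_expect (Suc m) (\<lambda>xs. \<phi> (last xs)) = hist_expect m (\<lambda>xs. 1 * step_mean \<phi> (last xs))"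
    using hist_expect_step[where G = "\<lambda>_. 1" and f = \<phi>] by simp
  also have "\<dots> \<le> hist_expect m (\<lambda>xs. c * \<phi> (last xs))"
    by (intro hist_expect_mono) (simp add: contr last_le_N)
  also have "\<dots> \<le> c * (c ^ m * hist_expect 0 (\<lambda>xs. \<phi> (last xs)))"
    unfolding hist_expect_scale using Suc c by (rule mult_left_mono)
  finally show ?case by simp
qed simp

end

locale absorbed_martingale_chain = bounded_markov_chain +
  assumes N_pos: "1 \<le> N"
    and martingale: "\<And>x. x \<le> N \<Longrightarrow> (\<Sum>y\<le>N. K x y * real y) = real x"
    and absorbing: "\<And>y. y \<noteq> N \<Longrightarrow> K N y = 0"
begin

lemma hist_expect_martingale:
  "l \<le> n \<Longrightarrow> hist_expect n (\<lambda>ys. G (take (Suc l) ys) * real (last ys))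
    = hist_expect l (\<lambda>ys. G ys * real (last ys))"
proof (induction n rule: dec_induct)
  case base
  show ?case by (rule hist_expect_cong) (simp add: histories_def)
next
  case (step n)
  have "hist_expect (Suc n) (\<lambda>ys. G (take (Suc l) ys) * real (last ys))
      = hist_expect (Suc n) (\<lambda>ys. G (take (Suc l) (butlast ys)) * real (last ys))"
    using step(1) by (intro hist_expect_cong) (simp add: histories_def take_butlast)
  also have "\<dots> = hist_expect n (\<lambda>xs. G (take (Suc l) xs) * step_mean real (last xs))"
    by (rule hist_expect_step)
  also have "\<dots> = hist_expect n (\<lambda>xs. G (take (Suc l) xs) * real (last xs))"
    by (intro hist_expect_cong) (simp add: step_mean_def martingale last_le_N)
  finally show ?case using step(3) by simp
qed

lemma AE_absorbed: "AE \<omega> in M. \<forall>m. X m \<omega> = N \<longrightarrow> (\<forall>j\<ge>m. X j \<omega> = N)"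
proof -
  have "AE \<omega> in M. \<not> (X m \<omega> = N \<and> X (Suc m) \<omega> \<noteq> N)" for m
    using absorbing by (intro AE_no_null_transition) auto
  then have "AE \<omega> in M. \<forall>m. X m \<omega> = N \<longrightarrow> X (Suc m) \<omega> = N"
    by (simp add: AE_all_countable)
  then show ?thesis
  proof (rule eventually_mono, intro allI impI)
    fix \<omega> m j assume step: "\<forall>m. X m \<omega> = N \<longrightarrow> X (Suc m) \<omega> = N" and "X m \<omega> = N" "m \<le> j"
    from \<open>m \<le> j\<close> show "X j \<omega> = N"
      using step \<open>X m \<omega> = N\<close> by (induction j rule: dec_induct) auto
  qed
qed

lemma fillEvent_eq: "fillEvent M X N = {\<omega> \<in> space M. \<exists>k. \<forall>j\<ge>k. X j \<omega> = N}"
  by (simp add: fillEvent_def tendsto_of_nat_iff_eventually_eq eventually_sequentially)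

lemma sets_fillEvent [measurable]: "fillEvent M X N \<in> sets M"
  unfolding fillEvent_eq by measurable

lemma measure_fill_cyl_le:
  assumes xs: "xs \<in> histories l"
  shows "measure M (fillEvent M X N \<inter> cyl l xs) \<le> real (last xs) / real N * measure M (cyl l xs)"
proof -
  \<comment> \<open>On the cylinder, X_n = N means X_n / N = 1, and E[X_n; cyl l xs] = last xs * P(cyl l xs).\<close>
  define F where "F k = {\<omega> \<in> space M. \<forall>j\<ge>k. X j \<omega> = N} \<inter> cyl l xs" for k
  have "measure M (F k) \<le> real (last xs) / real N * measure M (cyl l xs)" for k
  proof -
    have "measure M (F k)
        \<le> measure M {\<omega> \<in> space M. take (Suc l) (hist (k + l) \<omega>) = xs \<and> last (hist (k + l) \<omega>) = N}"
      by (intro finite_measure_mono) (auto simp: F_def cyl_def take_hist)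
    also have "\<dots> = hist_expect (k + l) (\<lambda>ys. of_bool (take (Suc l) ys = xs \<and> last ys = N))"
      by (rule measure_hist_pred)
    also have "\<dots> \<le> hist_expect (k + l) (\<lambda>ys. 1 / real N * (of_bool (take (Suc l) ys = xs) * real (last ys)))"
      using N_pos by (intro hist_expect_mono) auto
    also have "\<dots> = 1 / real N * hist_expect l (\<lambda>ys. of_bool (ys = xs) * real (last ys))"
      by (simp only: hist_expect_scale hist_expect_martingale[where G = "\<lambda>ys. of_bool (ys = xs)", OF le_add2])
    also have "\<dots> = real (last xs) / real N * measure M (cyl l xs)"
      using xs by (simp add: hist_expect_def mult.assoc Int_insert_right)
    finally show ?thesis .
  qed
  moreover have "(\<lambda>k. measure M (F k)) \<longlonglongrightarrow> measure M (\<Union>k. F k)"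
    by (rule finite_Lim_measure_incseq) (auto simp: incseq_def F_def)
  moreover have "(\<Union>k. F k) = fillEvent M X N \<inter> cyl l xs"
    by (auto simp: fillEvent_eq F_def)
  ultimately show ?thesis
    by (intro LIMSEQ_le_const2[where X = "\<lambda>k. measure M (F k)"]) auto
qed

lemma measure_fill_ge:
  assumes c: "0 \<le> c" "c < 1"
    and contr: "\<And>x. x \<le> N \<Longrightarrow> step_mean (gap_potential N) x \<le> c * gap_potential N x"
  shows "hist_expect 0 (\<lambda>xs. real (last xs)) / real N \<le> measure M (fillEvent M X N)"
proof -
  define e0 where "e0 = hist_expect 0 (\<lambda>xs. real (last xs))"
  define f0 where "f0 = hist_expect 0 (\<lambda>xs. gap_potential N (last xs))"
  have bound: "e0 / real N - c ^ n * f0 \<le> measure M (fillEvent M X N)" for n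
  proof -
    have "e0 = hist_expect n (\<lambda>xs. real (last xs))"
      using hist_expect_martingale[where G = "\<lambda>_. 1", of 0 n] by (simp add: e0_def)
    also have "\<dots> \<le> hist_expect n (\<lambda>xs. real N * of_bool (last xs = N) + real N * gap_potential N (last xs))"
    proof (rule hist_expect_mono)
      fix xs assume "xs \<in> histories n"
      then have x: "last xs \<le> N" by (rule last_le_N)
      have "real (last xs) \<le> real (last xs) * (real N - real (last xs))" if "last xs \<noteq> N"
        using that x by (simp add: mult_le_cancel_left1)
      then show "real (last xs) \<le> real N * of_bool (last xs = N) + real N * gap_potential N (last xs)"
        using mult_gap_le_gap_potential[OF x] gap_potential_nonneg[OF x] by (cases "last xs = N") auto
    qed
    also have "\<dots> = real N * measure M {\<omega> \<in> space M. X n \<omega> = N}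
        + real N * hist_expect n (\<lambda>xs. gap_potential N (last xs))"
      using measure_hist_pred[of "\<lambda>xs. last xs = N" n] by (simp add: hist_expect_add hist_expect_scale)
    also have "\<dots> \<le> real N * measure M (fillEvent M X N) + real N * (c ^ n * f0)"
    proof (intro add_mono mult_left_mono)
      show "measure M {\<omega> \<in> space M. X n \<omega> = N} \<le> measure M (fillEvent M X N)"
        using AE_absorbed by (intro finite_measure_mono_AE) (auto simp: fillEvent_eq elim!: eventually_mono)
      show "hist_expect n (\<lambda>xs. gap_potential N (last xs)) \<le> c ^ n * f0"
        unfolding f0_def by (rule hist_expect_contraction[OF c(1) contr])
    qed simp_all
    finally show ?thesis
      using N_pos by (simp add: field_simps)
  qed
  have "(\<lambda>n. e0 / real N - c ^ n * f0) \<longlonglongrightarrow> e0 / real N"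
    using c by (auto intro!: tendsto_eq_intros)
  then show ?thesis
    unfolding e0_def[symmetric] by (rule LIMSEQ_le_const2) (use bound in blast)
qed

lemma fill_deficit_le:
  "measure M (fillEvent M X N) - (\<integral>\<omega>. real (X l \<omega>) / real N * indicator (fillEvent M X N) \<omega> \<partial>M)
    \<le> hist_expect l (\<lambda>xs. (1 - real (last xs) / real N) * (real (last xs) / real N))"
proof -
  let ?F = "fillEvent M X N"
  have "measure M ?F = (\<Sum>xs\<in>histories l. measure M (?F \<inter> cyl l xs))"
    using integral_hist_indicator[of ?F "\<lambda>_. 1" l] by simp
  moreover have "(\<integral>\<omega>. real (X l \<omega>) / real N * indicator ?F \<omega> \<partial>M)
      = (\<Sum>xs\<in>histories l. real (last xs) / real N * measure M (?F \<inter> cyl l xs))"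
    using integral_hist_indicator[of ?F "\<lambda>xs. real (last xs) / real N" l] by simp
  ultimately have "measure M ?F - (\<integral>\<omega>. real (X l \<omega>) / real N * indicator ?F \<omega> \<partial>M)
      = (\<Sum>xs\<in>histories l. (1 - real (last xs) / real N) * measure M (?F \<inter> cyl l xs))"
    by (simp add: sum_subtractf[symmetric] algebra_simps)
  also have "\<dots> \<le> (\<Sum>xs\<in>histories l. (1 - real (last xs) / real N) * (real (last xs) / real N * measure M (cyl l xs)))"
    using N_pos last_le_N
    by (intro sum_mono mult_left_mono measure_fill_cyl_le) (auto simp: field_simps)
  finally show ?thesis
    by (simp add: hist_expect_def mult.assoc)
qed

theorem conditional_fill_deficit_le:
  assumes X0_pos: "AE \<omega> in M. 1 \<le> X 0 \<omega>" and c: "0 \<le> c" "c < 1"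
    and contr: "\<And>x. x \<le> N \<Longrightarrow> step_mean (gap_potential N) x \<le> c * gap_potential N x"
  shows "1 - (\<integral>\<omega>. real (X l \<omega>) / real N * indicator (fillEvent M X N) \<omega> \<partial>M)
      / measure M (fillEvent M X N) \<le> c ^ l * sqrt (real N)"
proof -
  define p where "p = measure M (fillEvent M X N)"
  define I where "I = (\<integral>\<omega>. real (X l \<omega>) / real N * indicator (fillEvent M X N) \<omega> \<partial>M)"
  define e0 where "e0 = hist_expect 0 (\<lambda>xs. real (last xs))"
  have "{\<omega> \<in> space M. 1 \<le> last (hist 0 \<omega>)} \<in> sets M"
    by measurable
  then have "1 = measure M {\<omega> \<in> space M. 1 \<le> last (hist 0 \<omega>)}"
    using X0_pos by (simp add: prob_Collect_eq_1)
  also have "\<dots> = hist_expect 0 (\<lambda>xs. of_bool (1 \<le> last xs))"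
    by (rule measure_hist_pred)
  also have "\<dots> \<le> e0"
    unfolding e0_def by (intro hist_expect_mono) auto
  finally have e0: "1 \<le> e0" .
  have p_ge: "e0 / real N \<le> p"
    unfolding e0_def p_def using c contr by (rule measure_fill_ge)
  have "p - I \<le> hist_expect l (\<lambda>xs. (1 - real (last xs) / real N) * (real (last xs) / real N))"
    unfolding p_def I_def by (rule fill_deficit_le)
  also have "\<dots> \<le> hist_expect l (\<lambda>xs. 1 / real N * gap_potential N (last xs))"
  proof (rule hist_expect_mono)
    fix xs assume "xs \<in> histories l"
    then have x: "last xs \<le> N" by (rule last_le_N)
    have "(1 - real (last xs) / real N) * (real (last xs) / real N)
        = real (last xs) * (real N - real (last xs)) / (real N * real N)"
      using N_pos by (simp add: field_simps)
    also have "\<dots> \<le> real N * gap_potential N (last xs) / (real N * real N)"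
      by (intro divide_right_mono mult_gap_le_gap_potential x) simp
    finally show "(1 - real (last xs) / real N) * (real (last xs) / real N)
        \<le> 1 / real N * gap_potential N (last xs)"
      using N_pos by simp
  qed
  also have "\<dots> \<le> 1 / real N * (c ^ l * hist_expect 0 (\<lambda>xs. gap_potential N (last xs)))"
    unfolding hist_expect_scale
    by (intro mult_left_mono hist_expect_contraction[OF c(1) contr]) simp_all
  also have "\<dots> \<le> 1 / real N * (c ^ l * (sqrt (real N) * e0))"
    unfolding e0_def hist_expect_scale[symmetric]
    by (intro mult_left_mono hist_expect_mono gap_potential_le_sqrt_mult last_le_N) (simp_all add: c)
  also have "\<dots> \<le> c ^ l * sqrt (real N) * p"
    using mult_left_mono[OF p_ge, of "c ^ l * sqrt (real N)"] c by simp
  finally have "p - I \<le> c ^ l * sqrt (real N) * p" .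
  moreover have "0 < p"
  proof -
    have "0 < e0 / real N" using e0 N_pos by simp
    with p_ge show ?thesis by linarith
  qed
  ultimately show ?thesis
    unfolding p_def[symmetric] I_def[symmetric] by (simp add: field_simps)
qed

end

lemma absorbed_martingale_chain_inkChain:
  assumes "prob_space M" "1 \<le> N" "inkChain M X N"
  shows "absorbed_martingale_chain M X N (inkKernel N)"
proof -
  have "(\<Sum>y\<le>N. inkKernel N x y * real y) = real x" if "x \<le> N" for x
    using that chamDelta_le[of N x] by (simp add: sum_inkKernel of_nat_diff)
  with assms show ?thesis
    unfolding absorbed_martingale_chain_def bounded_markov_chain_def absorbed_martingale_chain_axioms_def
      bounded_markov_chain_axioms_def inkChain_def
    by (auto simp: inkKernel_beyond inkKernel_absorbing elim: eventually_mono)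
qed

theorem mainTheorem9:
  fixes M :: "'a measure" and X :: "nat \<Rightarrow> 'a \<Rightarrow> nat" and N l :: nat
  assumes "prob_space M"
    and "N \<ge> 1"
    and "inkChain M X N"
    and "l \<ge> 1"
  shows "1 - (\<integral>\<omega>. real (X l \<omega>) / real N * indicator (fillEvent M X N) \<omega> \<partial>M)
               / measure M (fillEvent M X N)
         \<le> (71/72) ^ l * sqrt (real N)"
proof -
  interpret absorbed_martingale_chain M X N "inkKernel N"
    using assms(1-3) by (rule absorbed_martingale_chain_inkChain)
  have X0_pos: "AE \<omega> in M. 1 \<le> X 0 \<omega>"
    using assms(3) by (auto simp: inkChain_def elim: eventually_mono)
  have contraction: "step_mean (gap_potential N) x \<le> 71/72 * gap_potential N x" if "x \<le> N" for x
    unfolding step_mean_def sum_inkKernel[OF that] by (rule gap_potential_ink_step_le[OF that])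
  show ?thesis
    using conditional_fill_deficit_le[OF X0_pos _ _ contraction] by simp
qed

end
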